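(* Any edge-to-edge tiling of the sphere by quadrilaterals in which every vertex has degree $\ge 3$ contains a tile whose four vertices have degrees (in some order) $3,3,3,d$ with $d\ge3$; or $3,3,4,d$ with $4\le d\le 11$; or $3,3,5,d$ with $d\in\{5,6,7\}$; or $3,4,4,d$ with $d\in\{4,5\}$.
   Context: The degree of a vertex is the number of edges (equivalently, tile corners) at that vertex. *)

theory Defs
  imports "HOL-Combinatorics.Orbits" "HOL-Library.Multiset"
begin

text \<open>A map is given by a finite set of darts D,
  a fixed-point-free involution alpha on D (edges) and a permutation sigma of D
  (cyclic order of darts around each vertex).
  Every dart of a face orbit corresponds to one corner of that tile.\<close>

definition map_vertices :: "'a set \<Rightarrow> ('a \<Rightarrow> 'a) \<Rightarrow> 'a set set" where
  "map_vertices D sigma = (\<lambda>x. orbit sigma x) ` D"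

definition map_edges :: "'a set \<Rightarrow> ('a \<Rightarrow> 'a) \<Rightarrow> 'a set set" where
  "map_edges D alpha = (\<lambda>x. orbit alpha x) ` D"

definition map_faces :: "'a set \<Rightarrow> ('a \<Rightarrow> 'a) \<Rightarrow> ('a \<Rightarrow> 'a) \<Rightarrow> 'a set set" where
  "map_faces D alpha sigma = (\<lambda>x. orbit (sigma \<circ> alpha) x) ` D"

definition comb_map :: "'a set \<Rightarrow> ('a \<Rightarrow> 'a) \<Rightarrow> ('a \<Rightarrow> 'a) \<Rightarrow> bool" where
  "comb_map D alpha sigma \<longleftrightarrow>
     finite D \<and> D \<noteq> {} \<and> alpha permutes D \<and> sigma permutes D \<and>
     (\<forall>x\<in>D. alpha (alpha x) = x \<and> alpha x \<noteq> x)"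

definition map_connected :: "'a set \<Rightarrow> ('a \<Rightarrow> 'a) \<Rightarrow> ('a \<Rightarrow> 'a) \<Rightarrow> bool" where
  "map_connected D alpha sigma \<longleftrightarrow>
     (\<forall>x\<in>D. \<forall>y\<in>D. (x, y) \<in> {(u, v). v = alpha u \<or> v = sigma u}\<^sup>*)"

definition spherical_map :: "'a set \<Rightarrow> ('a \<Rightarrow> 'a) \<Rightarrow> ('a \<Rightarrow> 'a) \<Rightarrow> bool" where
  "spherical_map D alpha sigma \<longleftrightarrow>
     comb_map D alpha sigma \<and> map_connected D alpha sigma \<and>
     int (card (map_vertices D sigma)) - int (card (map_edges D alpha))
       + int (card (map_faces D alpha sigma)) = 2"

definition vdeg :: "('a \<Rightarrow> 'a) \<Rightarrow> 'a \<Rightarrow> nat" where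
  "vdeg sigma x = card (orbit sigma x)"

definition quad_tiling :: "'a set \<Rightarrow> ('a \<Rightarrow> 'a) \<Rightarrow> ('a \<Rightarrow> 'a) \<Rightarrow> bool" where
  "quad_tiling D alpha sigma \<longleftrightarrow>
     spherical_map D alpha sigma \<and>
     (\<forall>x\<in>D. card (orbit (sigma \<circ> alpha) x) = 4 \<and>
             card ((\<lambda>y. orbit sigma y) ` orbit (sigma \<circ> alpha) x) = 4)"

definition tile_degrees :: "('a \<Rightarrow> 'a) \<Rightarrow> ('a \<Rightarrow> 'a) \<Rightarrow> 'a \<Rightarrow> nat multiset" where
  "tile_degrees alpha sigma x = image_mset (vdeg sigma) (mset_set (orbit (sigma \<circ> alpha) x))"

end

theory Submission
  imports Defs Complex_Main
begin

text \<open>Give every corner of the tiling the weight 1/d, where d is the degree of its vertex.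
  The corners at a vertex then carry total weight 1, so the whole tiling carries weight V.
  Counting darts, 2E = 4F, so Euler's formula gives V = F + 2 > F; hence some tile
  carries weight more than 1. The only quadruples of integers \<open>\<ge> 3\<close> whose reciprocals
  sum to more than 1 are the ones listed.\<close>

lemma permutes_self_in_orbit: "f permutes D \<Longrightarrow> finite D \<Longrightarrow> x \<in> orbit f x"
  by (rule permutation_self_in_orbit) (auto simp: permutation_permutes)

lemma orbit_eq_of_mem:
  assumes "f permutes D" "finite D" "y \<in> orbit f x"
  shows "orbit f y = orbit f x"
  using assms by (metis cyclic_on_orbit orbit_cyclic_eq3)

lemma sum_over_orbits:
  assumes "f permutes D" "finite D"
  shows "(\<Sum>x\<in>D. g x) = (\<Sum>B\<in>(\<lambda>x. orbit f x) ` D. \<Sum>x\<in>B. g x)"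
proof -
  have "(\<Sum>x\<in>D. g x) = (\<Sum>B\<in>(\<lambda>x. orbit f x) ` D. \<Sum>x\<in>{x \<in> D. orbit f x = B}. g x)"
    by (rule sum.image_gen[OF assms(2)])
  also have "\<dots> = (\<Sum>B\<in>(\<lambda>x. orbit f x) ` D. \<Sum>x\<in>B. g x)"
  proof (rule sum.cong[OF refl])
    fix B assume "B \<in> (\<lambda>x. orbit f x) ` D"
    then obtain y where "y \<in> D" "B = orbit f y" by auto
    then have "{x \<in> D. orbit f x = B} = B"
      using permutes_self_in_orbit[OF assms] orbit_eq_of_mem[OF assms]
        permutes_orbit_subset[OF assms(1)]
      by blast
    then show "(\<Sum>x\<in>{x \<in> D. orbit f x = B}. g x) = (\<Sum>x\<in>B. g x)" by simp
  qed
  finally show ?thesis .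
qed

lemma card_eq_mult_card_orbits:
  assumes "f permutes D" "finite D" "\<And>x. x \<in> D \<Longrightarrow> card (orbit f x) = k"
  shows "card D = k * card ((\<lambda>x. orbit f x) ` D)"
proof -
  have "card D = (\<Sum>B\<in>(\<lambda>x. orbit f x) ` D. card B)"
    using sum_over_orbits[OF assms(1,2), of "\<lambda>_. 1::nat"] by simp
  also have "\<dots> = (\<Sum>B\<in>(\<lambda>x. orbit f x) ` D. k)"
    using assms(3) by (intro sum.cong) auto
  finally show ?thesis by simp
qed

lemma sum_inverse_card_orbit:
  assumes "f permutes D" "finite D"
  shows "(\<Sum>x\<in>D. 1 / real (card (orbit f x))) = real (card ((\<lambda>x. orbit f x) ` D))"
proof -
  have "(\<Sum>x\<in>B. 1 / real (card (orbit f x))) = 1" if "B \<in> (\<lambda>x. orbit f x) ` D" for B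
  proof -
    from that obtain y where y: "y \<in> D" "B = orbit f y" by blast
    have "finite B"
      using y assms finite_subset permutes_orbit_subset by metis
    moreover have "B \<noteq> {}" using y orbit_nonempty by metis
    ultimately have "card B > 0" by auto
    moreover have "(\<Sum>x\<in>B. 1 / real (card (orbit f x))) = (\<Sum>x\<in>B. 1 / real (card B))"
      using y orbit_eq_of_mem[OF assms] by (intro sum.cong) auto
    ultimately show ?thesis by simp
  qed
  then show ?thesis
    by (simp add: sum_over_orbits[OF assms])
qed

lemma card_orbit_fixpoint_free_involution:
  assumes "f (f x) = x" "f x \<noteq> x"
  shows "card (orbit f x) = 2"
proof -
  have "orbit f x = {(f ^^ m) x | m. m < 2}"
    by (rule orbit_altdef_bounded) (use assms in \<open>auto simp: numeral_eq_Suc\<close>)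
  also have "\<dots> = {x, f x}"
    by (auto simp: numeral_eq_Suc less_Suc_eq intro: exI[of _ 0] exI[of _ "Suc 0"])
  finally show ?thesis using assms by auto
qed

lemma quad_tiling_card_vertices:
  assumes "quad_tiling D alpha sigma"
  shows "card (map_vertices D sigma) = card (map_faces D alpha sigma) + 2"
proof -
  have fin: "finite D" and alpha: "alpha permutes D" and sigma: "sigma permutes D"
    and inv: "\<forall>x\<in>D. alpha (alpha x) = x \<and> alpha x \<noteq> x"
    and euler: "int (card (map_vertices D sigma)) - int (card (map_edges D alpha))
       + int (card (map_faces D alpha sigma)) = 2"
    and quad: "\<forall>x\<in>D. card (orbit (sigma \<circ> alpha) x) = 4"
    using assms unfolding quad_tiling_def spherical_map_def comb_map_def by auto
  have "card (orbit alpha x) = 2" if "x \<in> D" for x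
    using inv that by (simp add: card_orbit_fixpoint_free_involution)
  then have "card D = 2 * card (map_edges D alpha)"
    unfolding map_edges_def by (rule card_eq_mult_card_orbits[OF alpha fin])
  moreover have "card D = 4 * card (map_faces D alpha sigma)"
    unfolding map_faces_def
    by (rule card_eq_mult_card_orbits[OF permutes_compose[OF alpha sigma] fin]) (use quad in blast)
  ultimately show ?thesis using euler by linarith
qed

lemma quad_tiling_ex_tile_inverse_degrees_gt_1:
  assumes "quad_tiling D alpha sigma"
  shows "\<exists>x\<in>D. (\<Sum>y\<in>orbit (sigma \<circ> alpha) x. 1 / real (vdeg sigma y)) > 1"
proof (rule ccontr)
  assume "\<not> ?thesis"
  then have tile_le: "(\<Sum>y\<in>B. 1 / real (vdeg sigma y)) \<le> 1"
    if "B \<in> map_faces D alpha sigma" for B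
    using that unfolding map_faces_def by force
  have fin: "finite D" and alpha: "alpha permutes D" and sigma: "sigma permutes D"
    using assms unfolding quad_tiling_def spherical_map_def comb_map_def by auto
  have "real (card (map_vertices D sigma)) = (\<Sum>x\<in>D. 1 / real (vdeg sigma x))"
    unfolding map_vertices_def vdeg_def by (rule sum_inverse_card_orbit[OF sigma fin, symmetric])
  also have "\<dots> = (\<Sum>B\<in>map_faces D alpha sigma. \<Sum>y\<in>B. 1 / real (vdeg sigma y))"
    unfolding map_faces_def by (rule sum_over_orbits[OF permutes_compose[OF alpha sigma] fin])
  also have "\<dots> \<le> real (card (map_faces D alpha sigma))"
    using sum_mono[OF tile_le] by simp
  finally show False using quad_tiling_card_vertices[OF assms] by simp
qed

lemma inverse_nat_le: "0 < k \<Longrightarrow> k \<le> n \<Longrightarrow> 1 / real n \<le> 1 / real k"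
  by (simp add: frac_le)

lemma nat_less_of_inverse_less:
  assumes "1 / real k < 1 / real n" "0 < k"
  shows "n < k"
  using assms inverse_nat_le[of k n] by (cases "n < k") auto

lemma sorted_inverse_sum_gt_1_cases:
  fixes a b c d :: nat
  assumes "3 \<le> a" "a \<le> b" "b \<le> c" "c \<le> d"
    and sum_gt: "1 / real a + 1 / real b + 1 / real c + 1 / real d > 1"
  shows "(a = 3 \<and> b = 3 \<and> c = 3) \<or> (a = 3 \<and> b = 3 \<and> c = 4 \<and> d \<le> 11) \<or>
         (a = 3 \<and> b = 3 \<and> c = 5 \<and> d \<le> 7) \<or> (a = 3 \<and> b = 4 \<and> c = 4 \<and> d \<le> 5)"
proof -
  have "1 / real b \<le> 1 / real a" "1 / real c \<le> 1 / real b" "1 / real d \<le> 1 / real c"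
    using assms inverse_nat_le by auto
  note mono = this sum_gt
  have "a < 4" by (rule nat_less_of_inverse_less) (use mono in simp_all)
  then have a: "a = 3" using assms(1) by simp
  have "b < 5" by (rule nat_less_of_inverse_less) (use mono a in simp_all)
  then consider "b = 3" | "b = 4" using a assms(2) by linarith
  then show ?thesis
  proof cases
    case b: 1
    have "c < 6" by (rule nat_less_of_inverse_less) (use mono a b in simp_all)
    then consider "c = 3" | "c = 4" | "c = 5" using b assms(3) by linarith
    then show ?thesis
    proof cases
      case c: 2
      have "d < 12" by (rule nat_less_of_inverse_less) (use sum_gt a b c in simp_all)
      with a b c show ?thesis by simp
    next
      case c: 3
      have "d < 8" by (rule nat_less_of_inverse_less) (use sum_gt a b c in simp_all)
      with a b c show ?thesis by simp
    qed (use a b in simp)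
  next
    case b: 2
    have "c < 5" by (rule nat_less_of_inverse_less) (use mono a b in simp_all)
    then have c: "c = 4" using b assms(3) by simp
    have "d < 6" by (rule nat_less_of_inverse_less) (use sum_gt a b c in simp_all)
    with a b c show ?thesis by simp
  qed
qed

lemma mset_inverse_sum_gt_1_cases:
  fixes M :: "nat multiset"
  assumes "size M = 4" "\<forall>d\<in>#M. d \<ge> 3" "(\<Sum>d\<in>#M. 1 / real d) > 1"
  shows "\<exists>d::nat.
           (M = {#3, 3, 3, d#} \<and> 3 \<le> d) \<or>
           (M = {#3, 3, 4, d#} \<and> 4 \<le> d \<and> d \<le> 11) \<or>
           (M = {#3, 3, 5, d#} \<and> d \<in> {5, 6, 7}) \<or>
           (M = {#3, 4, 4, d#} \<and> d \<in> {4, 5})"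
proof -
  define xs where "xs = sorted_list_of_multiset M"
  have "length xs = 4" using assms(1) unfolding xs_def by (metis mset_sorted_list_of_multiset size_mset)
  then obtain a b c d where xs: "xs = [a, b, c, d]"
    by (auto simp: numeral_eq_Suc length_Suc_conv)
  have M: "M = {#a, b, c, d#}"
    using xs unfolding xs_def by (metis mset.simps mset_sorted_list_of_multiset add_mset_commute)
  have sorted: "a \<le> b" "b \<le> c" "c \<le> d"
    using sorted_sorted_list_of_multiset[of M] xs unfolding xs_def by auto
  have "3 \<le> a" using assms(2) M by simp
  moreover have "1 / real a + 1 / real b + 1 / real c + 1 / real d > 1"
    using assms(3) M by (simp add: add.assoc)
  ultimately have cases: "(a = 3 \<and> b = 3 \<and> c = 3) \<or> (a = 3 \<and> b = 3 \<and> c = 4 \<and> d \<le> 11) \<or>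
      (a = 3 \<and> b = 3 \<and> c = 5 \<and> d \<le> 7) \<or> (a = 3 \<and> b = 4 \<and> c = 4 \<and> d \<le> 5)"
    by (rule sorted_inverse_sum_gt_1_cases[OF _ sorted])
  show ?thesis
    unfolding M using sorted cases by (elim disjE conjE) (auto intro!: exI[of _ d])
qed

lemma sum_mset_inverse_tile_degrees:
  "(\<Sum>d\<in>#tile_degrees alpha sigma x. 1 / real d)
    = (\<Sum>y\<in>orbit (sigma \<circ> alpha) x. 1 / real (vdeg sigma y))"
  unfolding tile_degrees_def sum_unfold_sum_mset
  by (simp add: image_mset.compositionality comp_def)

theorem lemma1:
  fixes D :: "'a set" and alpha sigma :: "'a \<Rightarrow> 'a"
  assumes "quad_tiling D alpha sigma"
    and "\<forall>x\<in>D. vdeg sigma x \<ge> 3"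
  shows "\<exists>x\<in>D. \<exists>d::nat.
           (tile_degrees alpha sigma x = {#3, 3, 3, d#} \<and> 3 \<le> d) \<or>
           (tile_degrees alpha sigma x = {#3, 3, 4, d#} \<and> 4 \<le> d \<and> d \<le> 11) \<or>
           (tile_degrees alpha sigma x = {#3, 3, 5, d#} \<and> d \<in> {5, 6, 7}) \<or>
           (tile_degrees alpha sigma x = {#3, 4, 4, d#} \<and> d \<in> {4, 5})"
proof -
  obtain x where x: "x \<in> D"
    and gt: "(\<Sum>y\<in>orbit (sigma \<circ> alpha) x. 1 / real (vdeg sigma y)) > 1"
    using quad_tiling_ex_tile_inverse_degrees_gt_1[OF assms(1)] by blast
  have alpha: "alpha permutes D" and sigma: "sigma permutes D" and "finite D"
    and four: "card (orbit (sigma \<circ> alpha) x) = 4"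
    using assms(1) x unfolding quad_tiling_def spherical_map_def comb_map_def by auto
  have tile: "orbit (sigma \<circ> alpha) x \<subseteq> D"
    using x permutes_orbit_subset[OF permutes_compose[OF alpha sigma]] by auto
  then have finite_tile: "finite (orbit (sigma \<circ> alpha) x)"
    using \<open>finite D\<close> finite_subset by blast
  have size: "size (tile_degrees alpha sigma x) = 4"
    using four unfolding tile_degrees_def by simp
  have degrees: "\<forall>d\<in>#tile_degrees alpha sigma x. d \<ge> 3"
    using tile finite_tile assms(2) unfolding tile_degrees_def by auto
  have "(\<Sum>d\<in>#tile_degrees alpha sigma x. 1 / real d) > 1"
    using gt by (simp add: sum_mset_inverse_tile_degrees)
  with mset_inverse_sum_gt_1_cases[OF size degrees] x show ?thesis by blast
qed

end
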